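(* Let $n\ge2$ be an integer, $\sigma\ge0$, $R'>0$, and define $a_1=\frac{n}{2R'}$, $a_2=\frac{a_1}{n-1}$, $a_k=\min\big\{(1+\frac1{n-1})a_{k-1},\frac{\sqrt{n(n+\sigma A_{k-1})}}{2R'}\big\}$ for $k\ge3$, where $A_k=\sum_{i=1}^ka_i$. Then for all $k\ge1$, $$A_k\ge\max\Big\{\frac{n-1}{2R'}\Big(1+\frac1{n-1}\Big)^k\mathbb{1}_{k\le k_0},\ \frac{(n-1)^2\sigma}{(4R')^2n}(k-k_0+n-1)^2\mathbb{1}_{k\ge k_0},\ \frac{n(k-K_0+n-1)}{2R'}\mathbb{1}_{k\ge K_0}\Big\},$$ where $\mathbb{1}$ denotes the indicator function, $K_0=\big\lceil\frac{\log n}{\log n-\log(n-1)}\big\rceil$, $k_0=\big\lceil\frac{\log B_{n,\sigma,R'}}{\log n-\log(n-1)}\big\rceil$, and $$B_{n,\sigma,R'}=\frac{\sigma n(n-1)}{4R'}\Big[1+\sqrt{1+\Big(\frac{4R'}{\sigma(n-1)}\Big)^2}\Big]\ge n\max\Big\{1,\frac{\sigma(n-1)}{2R'}\Big\}.$$ *)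

theory Defs
  imports Complex_Main
begin

text \<open>The step sizes a_k (indexed from 1; a 0 = 0 is a dummy value) with parameters
  n, sigma, R' (written R).\<close>

function seq_a :: "nat \<Rightarrow> real \<Rightarrow> real \<Rightarrow> nat \<Rightarrow> real" where
  "seq_a n \<sigma> R 0 = 0"
| "seq_a n \<sigma> R (Suc 0) = real n / (2 * R)"
| "seq_a n \<sigma> R (Suc (Suc 0)) = (real n / (2 * R)) / (real n - 1)"
| "seq_a n \<sigma> R (Suc (Suc (Suc k))) =
     min ((1 + 1 / (real n - 1)) * seq_a n \<sigma> R (Suc (Suc k)))
         (sqrt (real n * (real n + \<sigma> * (\<Sum>i\<in>{1..Suc (Suc k)}. seq_a n \<sigma> R i))) / (2 * R))"
  by pat_completeness auto
termination by (relation "measure (\<lambda>(n, \<sigma>, R, k). k)") auto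

definition seq_A :: "nat \<Rightarrow> real \<Rightarrow> real \<Rightarrow> nat \<Rightarrow> real" where
  "seq_A n \<sigma> R k = (\<Sum>i\<in>{1..k}. seq_a n \<sigma> R i)"

text \<open>B_{n,sigma,R'}; written as (n(n-1)/(4R')) (sigma + sqrt(sigma^2 + (4R'/(n-1))^2)),
  which equals the paper's expression for sigma > 0 and is its continuous extension
  (value n) at sigma = 0.\<close>
definition B_const :: "nat \<Rightarrow> real \<Rightarrow> real \<Rightarrow> real" where
  "B_const n \<sigma> R = real n * (real n - 1) / (4 * R) *
      (\<sigma> + sqrt (\<sigma>\<^sup>2 + (4 * R / (real n - 1))\<^sup>2))"

definition K0_const :: "nat \<Rightarrow> int" where
  "K0_const n = \<lceil>ln (real n) / (ln (real n) - ln (real n - 1))\<rceil>"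

definition k0_const :: "nat \<Rightarrow> real \<Rightarrow> real \<Rightarrow> int" where
  "k0_const n \<sigma> R = \<lceil>ln (B_const n \<sigma> R) / (ln (real n) - ln (real n - 1))\<rceil>"

end

theory Submission
  imports Defs
begin

text \<open>Write q = n/(n-1). As long as the square-root cap is inactive the steps grow
  geometrically, a_k = q^(k-1)/(2R') and A_k = (n-1)/(2R') q^k. The cap
  sqrt(n(n + sigma A_k))/(2R') is at least q a_k exactly when t = q^k satisfies
  t^2 \<le> n^2 + n(n-1) sigma t/(2R'), i.e. while t is below the positive root B of this
  quadratic; so the geometric phase lasts up to k_0. Once q^k \<ge> n (from K_0 on) every step
  is at least n/(2R'), giving linear growth. From k_0 on, with c = (n-1)^2 sigma/(16 R'^2 n)
  and m = k - k_0 + n - 1, an induction gives a_k \<ge> 2c m and A_k \<ge> c m^2: both branches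
  of the minimum are at least q 2c m \<ge> 2c(m+1), the cap because
  n sigma c m^2 = ((n-1) sigma m/(4R'))^2.\<close>

lemma ceiling_log_le_iff:
  fixes q x :: real
  assumes "1 < q" and "0 < x"
  shows "\<lceil>ln x / ln q\<rceil> \<le> int k \<longleftrightarrow> x \<le> q ^ k"
proof -
  have "\<lceil>ln x / ln q\<rceil> \<le> int k \<longleftrightarrow> ln x \<le> ln (q ^ k)"
    using assms by (simp add: ceiling_le_iff pos_divide_le_eq ln_realpow)
  also have "\<dots> \<longleftrightarrow> x \<le> q ^ k"
    using assms by simp
  finally show ?thesis .
qed

lemma square_le_below_root:
  fixes \<alpha> \<sigma> d t :: real
  assumes "0 \<le> \<alpha>" and "0 \<le> t" and "t \<le> \<alpha> * (\<sigma> + sqrt (\<sigma>\<^sup>2 + d\<^sup>2))"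
  shows "t\<^sup>2 \<le> 2 * \<alpha> * \<sigma> * t + (\<alpha> * d)\<^sup>2"
proof -
  define s where "s = sqrt (\<sigma>\<^sup>2 + d\<^sup>2)"
  have "\<alpha> * \<sigma> \<le> \<alpha> * s"
    unfolding s_def using assms(1) by (intro mult_left_mono) simp_all
  moreover have "t \<le> \<alpha> * \<sigma> + \<alpha> * s"
    using assms(3) by (simp add: s_def distrib_left)
  ultimately have "\<bar>t - \<alpha> * \<sigma>\<bar> \<le> \<alpha> * s"
    using assms(2) unfolding abs_le_iff by linarith
  then have "\<bar>t - \<alpha> * \<sigma>\<bar>\<^sup>2 \<le> (\<alpha> * s)\<^sup>2"
    by (rule power_mono) simp
  also have "(\<alpha> * s)\<^sup>2 = (\<alpha> * \<sigma>)\<^sup>2 + (\<alpha> * d)\<^sup>2"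
    by (simp add: s_def power_mult_distrib distrib_left)
  finally show ?thesis
    by (simp add: power2_diff power_mult_distrib algebra_simps)
qed

lemma seq_A_Suc: "seq_A n \<sigma> R (Suc k) = seq_A n \<sigma> R k + seq_a n \<sigma> R (Suc k)"
  by (simp add: seq_A_def)

locale step_sizes =
  fixes n :: nat and \<sigma> R :: real
  assumes n_ge_2: "n \<ge> 2" and \<sigma>_nonneg: "\<sigma> \<ge> 0" and R_pos: "R > 0"
begin

abbreviation "a \<equiv> seq_a n \<sigma> R"
abbreviation "A \<equiv> seq_A n \<sigma> R"
abbreviation "B \<equiv> B_const n \<sigma> R"
abbreviation "k0 \<equiv> k0_const n \<sigma> R"
abbreviation "K0 \<equiv> K0_const n"
abbreviation "q \<equiv> real n / (real n - 1)"
abbreviation "c \<equiv> (real n - 1)\<^sup>2 * \<sigma> / ((4 * R)\<^sup>2 * real n)"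

lemma one_plus_inverse_eq_q: "1 + 1 / (real n - 1) = q"
  using n_ge_2 by (simp add: field_simps)

lemma n_minus_1_pos: "0 < real n - 1"
  using n_ge_2 by simp

lemma q_gt_1: "q > 1"
  using n_ge_2 by simp

lemma seq_a_rec:
  assumes "2 \<le> k"
  shows "a (Suc k) = min (q * a k) (sqrt (real n * (real n + \<sigma> * A k)) / (2 * R))"
proof -
  obtain j where "k = 2 + j"
    using le_Suc_ex[OF assms] by blast
  then have "k = Suc (Suc j)"
    by simp
  then show ?thesis
    by (simp add: one_plus_inverse_eq_q seq_A_def)
qed

lemma seq_a_pos: "1 \<le> k \<Longrightarrow> 0 < a k"
proof (induction k rule: less_induct)
  case (less k)
  consider "k = 1" | "k = 2" | "3 \<le> k"
    using less.prems by linarith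
  then show ?case
  proof cases
    case 3
    define j where "j = k - 1"
    have "2 \<le> j" and "k = Suc j"
      using 3 by (simp_all add: j_def)
    have "0 \<le> A j"
      unfolding seq_A_def using \<open>k = Suc j\<close> less.IH by (intro sum_nonneg) (auto intro: less_imp_le)
    then have "0 < sqrt (real n * (real n + \<sigma> * A j))"
      using n_ge_2 \<sigma>_nonneg by (simp add: add_pos_nonneg)
    moreover have "0 < q * a j"
      using \<open>k = Suc j\<close> \<open>2 \<le> j\<close> less.IH[of j] q_gt_1 by (intro mult_pos_pos) auto
    ultimately show ?thesis
      using \<open>2 \<le> j\<close> \<open>k = Suc j\<close> R_pos by (simp add: seq_a_rec)
  qed (use n_ge_2 R_pos in \<open>simp_all add: numeral_2_eq_2\<close>)
qed

lemma seq_A_nonneg: "0 \<le> A k"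
proof -
  have "0 \<le> a i" if "1 \<le> i" for i
    using seq_a_pos[OF that] by simp
  then show ?thesis
    unfolding seq_A_def by (intro sum_nonneg) simp
qed

lemma sqrt_term_ge_n: "real n / (2 * R) \<le> sqrt (real n * (real n + \<sigma> * A k)) / (2 * R)"
proof -
  have "real n * real n \<le> real n * (real n + \<sigma> * A k)"
    using \<sigma>_nonneg seq_A_nonneg[of k] by (intro mult_left_mono) auto
  then have "(real n)\<^sup>2 \<le> real n * (real n + \<sigma> * A k)"
    by (simp add: power2_eq_square)
  then show ?thesis
    using R_pos by (intro divide_right_mono real_le_rsqrt) auto
qed

lemma B_eq: "B = real n * (real n - 1) / (4 * R) * (\<sigma> + sqrt (\<sigma>\<^sup>2 + (4 * R / (real n - 1))\<^sup>2))"
  by (simp add: B_const_def)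

lemma B_coeffs:
  "real n * (real n - 1) / (4 * R) * (4 * R / (real n - 1)) = real n"
  "real n * (real n - 1) / (4 * R) * (2 * \<sigma>) = real n * (\<sigma> * (real n - 1) / (2 * R))"
  using n_ge_2 R_pos by (simp_all add: field_simps)

lemma B_ge_n: "real n \<le> B"
proof -
  have "real n * (real n - 1) / (4 * R) * (4 * R / (real n - 1)) \<le> B"
    unfolding B_eq using n_ge_2 R_pos \<sigma>_nonneg
    by (intro mult_left_mono) (auto intro: add_increasing)
  then show ?thesis
    by (simp only: B_coeffs)
qed

lemma B_gt_n: "0 < \<sigma> \<Longrightarrow> real n < B"
proof -
  assume "0 < \<sigma>"
  then have "4 * R / (real n - 1) < \<sigma> + sqrt (\<sigma>\<^sup>2 + (4 * R / (real n - 1))\<^sup>2)"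
    using real_sqrt_sum_squares_ge2[of "4 * R / (real n - 1)" \<sigma>] by linarith
  then have "real n * (real n - 1) / (4 * R) * (4 * R / (real n - 1)) < B"
    unfolding B_eq using n_ge_2 R_pos by (intro mult_strict_left_mono) auto
  then show ?thesis
    by (simp only: B_coeffs)
qed

lemma B_ge_\<sigma>: "real n * (\<sigma> * (real n - 1) / (2 * R)) \<le> B"
proof -
  have "2 * \<sigma> \<le> \<sigma> + sqrt (\<sigma>\<^sup>2 + (4 * R / (real n - 1))\<^sup>2)"
    using real_sqrt_sum_squares_ge1[of \<sigma> "4 * R / (real n - 1)"] by linarith
  then have "real n * (real n - 1) / (4 * R) * (2 * \<sigma>) \<le> B"
    unfolding B_eq using n_ge_2 R_pos by (intro mult_left_mono) auto
  then show ?thesis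
    by (simp only: B_coeffs(2))
qed

lemma square_le_below_B:
  assumes "0 \<le> t" and "t \<le> B"
  shows "t\<^sup>2 \<le> real n * (real n + \<sigma> * ((real n - 1) / (2 * R) * t))"
proof -
  have "t\<^sup>2 \<le> 2 * (real n * (real n - 1) / (4 * R)) * \<sigma> * t
           + (real n * (real n - 1) / (4 * R) * (4 * R / (real n - 1)))\<^sup>2"
    using assms n_ge_2 R_pos by (intro square_le_below_root) (auto simp: B_eq)
  then show ?thesis
    using R_pos by (simp only: B_coeffs(1)) (simp add: power2_eq_square field_simps)
qed

lemma ln_diff_eq_ln_q: "ln (real n) - ln (real n - 1) = ln q"
  using n_ge_2 by (simp add: ln_div)

lemma K0_le_iff: "K0 \<le> int k \<longleftrightarrow> real n \<le> q ^ k"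
  unfolding K0_const_def ln_diff_eq_ln_q using ceiling_log_le_iff[OF q_gt_1] n_ge_2 by simp

lemma k0_le_iff: "k0 \<le> int k \<longleftrightarrow> B \<le> q ^ k"
  unfolding k0_const_def ln_diff_eq_ln_q using ceiling_log_le_iff[OF q_gt_1] B_ge_n n_ge_2 by simp

lemma K0_ge_1: "1 \<le> K0"
  using K0_le_iff[of 0] n_ge_2 by simp

lemma k0_ge_1: "1 \<le> k0"
  using k0_le_iff[of 0] B_ge_n n_ge_2 by simp

lemma K0_le_k0: "K0 \<le> k0"
  using k0_le_iff[of "nat k0"] K0_le_iff[of "nat k0"] B_ge_n k0_ge_1 by simp

lemma K0_eq_1_imp_n_eq_2: "K0 = 1 \<Longrightarrow> n = 2"
  using K0_le_iff[of 1] n_ge_2 by (simp add: le_divide_eq)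

lemma k0_ge_2: "0 < \<sigma> \<Longrightarrow> 2 \<le> k0"
proof (rule ccontr)
  assume "0 < \<sigma>" and "\<not> 2 \<le> k0"
  then have "B \<le> q"
    using k0_le_iff[of 1] by simp
  also have "q \<le> real n"
    using n_ge_2 by (simp add: divide_le_eq)
  finally show False
    using B_gt_n \<open>0 < \<sigma>\<close> by simp
qed

lemma seq_a_Suc_geometric:
  assumes "2 \<le> k" and "int k < k0"
    and "a k = q ^ (k - 1) / (2 * R)" and "A k = (real n - 1) / (2 * R) * q ^ k"
  shows "a (Suc k) = q ^ k / (2 * R)"
proof -
  have "q ^ k < B"
    using k0_le_iff[of k] assms(2) by simp
  then have "(q ^ k)\<^sup>2 \<le> real n * (real n + \<sigma> * A k)"
    unfolding assms(4) using q_gt_1 by (intro square_le_below_B) auto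
  then have "q ^ k / (2 * R) \<le> sqrt (real n * (real n + \<sigma> * A k)) / (2 * R)"
    using R_pos by (intro divide_right_mono real_le_rsqrt) auto
  moreover have "q * a k = q ^ k / (2 * R)"
    using assms(1,3) by (simp add: power_eq_if)
  ultimately show ?thesis
    using seq_a_rec[OF assms(1)] by simp
qed

lemma geometric_increment:
  "(real n - 1) / (2 * R) * x + x / (2 * R) = (real n - 1) / (2 * R) * (q * x)"
  using n_ge_2 R_pos by (simp add: field_simps)

lemma geometric_phase:
  assumes "1 \<le> k" and "int k \<le> k0"
  shows "A k = (real n - 1) / (2 * R) * q ^ k \<and> (2 \<le> k \<longrightarrow> a k = q ^ (k - 1) / (2 * R))"
  using assms
proof (induction k)
  case (Suc k)
  show ?case
  proof (cases "k = 0")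
    case True
    then show ?thesis
      using n_ge_2 by (simp add: seq_A_def)
  next
    case False
    then have IH: "A k = (real n - 1) / (2 * R) * q ^ k" "2 \<le> k \<Longrightarrow> a k = q ^ (k - 1) / (2 * R)"
      using Suc by auto
    have a_Suc: "a (Suc k) = q ^ k / (2 * R)"
    proof (cases "k = 1")
      case True
      then show ?thesis
        by (simp add: numeral_2_eq_2)
    next
      case False
      then show ?thesis
        using seq_a_Suc_geometric IH Suc.prems(2) \<open>k \<noteq> 0\<close> by simp
    qed
    have "A (Suc k) = (real n - 1) / (2 * R) * q ^ Suc k"
      by (simp only: seq_A_Suc IH(1) a_Suc geometric_increment power_Suc)
    then show ?thesis
      using a_Suc by simp
  qed
qed simp

lemma seq_a_ge_after_K0: "K0 < int j \<Longrightarrow> real n / (2 * R) \<le> a j"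
proof (induction j)
  case (Suc j)
  show ?case
  proof (cases "K0 = int j")
    case True
    show ?thesis
    proof (cases "j = 1")
      case True
      then show ?thesis
        using K0_eq_1_imp_n_eq_2 \<open>K0 = int j\<close> by (simp add: numeral_2_eq_2)
    next
      case False
      then have "2 \<le> j" and "int j \<le> k0"
        using True K0_ge_1 K0_le_k0 by auto
      then have "q * a j = q ^ j / (2 * R)"
        using geometric_phase[of j] by (simp add: power_eq_if)
      moreover have "real n \<le> q ^ j"
        using K0_le_iff[of j] True by simp
      ultimately have "real n / (2 * R) \<le> q * a j"
        using R_pos by (simp add: divide_right_mono)
      then show ?thesis
        using seq_a_rec[OF \<open>2 \<le> j\<close>] sqrt_term_ge_n[of j] by simp
    qed
  next
    case False
    then have "2 \<le> j" and IH: "real n / (2 * R) \<le> a j"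
      using Suc K0_ge_1 by auto
    then have "1 * a j \<le> q * a j"
      using q_gt_1 seq_a_pos[of j] by (intro mult_right_mono) auto
    then show ?thesis
      using IH seq_a_rec[OF \<open>2 \<le> j\<close>] sqrt_term_ge_n[of j] by simp
  qed
qed (use K0_ge_1 in simp)

lemma linear_phase:
  assumes "K0 \<le> int k"
  shows "real n * (real k - real_of_int K0 + real n - 1) / (2 * R) \<le> A k"
proof -
  have "nat K0 \<le> k"
    using assms by simp
  then show ?thesis
  proof (induction k rule: dec_induct)
    case base
    have "A (nat K0) = (real n - 1) / (2 * R) * q ^ nat K0"
      using geometric_phase[of "nat K0"] K0_ge_1 K0_le_k0 by simp
    moreover have "real n \<le> q ^ nat K0"
      using K0_le_iff[of "nat K0"] K0_ge_1 by simp
    then have "(real n - 1) / (2 * R) * real n \<le> (real n - 1) / (2 * R) * q ^ nat K0"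
      using n_ge_2 R_pos by (intro mult_left_mono) auto
    moreover have "real (nat K0) = real_of_int K0"
      using K0_ge_1 by simp
    ultimately show ?case
      by (simp add: mult.commute)
  next
    case (step k)
    then have "real n / (2 * R) \<le> a (Suc k)"
      by (intro seq_a_ge_after_K0) simp
    moreover have "real n * (real (Suc k) - real_of_int K0 + real n - 1) / (2 * R)
        = real n * (real k - real_of_int K0 + real n - 1) / (2 * R) + real n / (2 * R)"
      using R_pos by (simp add: field_simps)
    ultimately show ?case
      using step.IH by (simp add: seq_A_Suc)
  qed
qed

lemma quadratic_phase_start:
  assumes "0 < \<sigma>"
  shows "c * (real n - 1)\<^sup>2 \<le> A (nat k0) \<and> 2 * c * (real n - 1) \<le> a (nat k0)"
proof -
  define K where "K = nat k0"
  define P where "P = \<sigma> * (real n - 1)\<^sup>2 / (4 * R\<^sup>2)"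
  have "2 \<le> K"
    using k0_ge_2[OF assms] by (simp add: K_def)
  then have A_K: "A K = (real n - 1) / (2 * R) * q ^ K" and a_K: "q * a K = q ^ K / (2 * R)"
    using geometric_phase[of K] k0_ge_1 by (simp_all add: K_def power_eq_if)
  have \<beta>_le: "real n * (\<sigma> * (real n - 1) / (2 * R)) \<le> q ^ K"
    using B_ge_\<sigma> k0_le_iff[of K] k0_ge_1 by (simp add: K_def)
  have "(real n - 1) / (2 * R) * (real n * (\<sigma> * (real n - 1) / (2 * R))) \<le> A K"
    unfolding A_K using \<beta>_le n_ge_2 R_pos by (intro mult_left_mono) auto
  moreover have "(real n - 1) / (2 * R) * (real n * (\<sigma> * (real n - 1) / (2 * R))) = P * real n"
    using R_pos by (simp add: P_def field_simps power2_eq_square)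
  moreover have "(real n - 1) / real n * (real n * (\<sigma> * (real n - 1) / (2 * R)) / (2 * R))
      \<le> (real n - 1) / real n * (q * a K)"
    unfolding a_K using \<beta>_le n_ge_2 R_pos by (intro mult_left_mono divide_right_mono) auto
  moreover have "(real n - 1) / real n * (real n * (\<sigma> * (real n - 1) / (2 * R)) / (2 * R)) = P"
    using n_ge_2 R_pos by (simp add: P_def field_simps power2_eq_square)
  moreover have "(real n - 1) / real n * (q * a K) = a K"
    using n_ge_2 by simp
  ultimately have P_le: "P * real n \<le> A K" "P \<le> a K"
    by simp_all
  have "c * (real n - 1)\<^sup>2 = P * ((real n - 1)\<^sup>2 / (4 * real n))"
    and "2 * c * (real n - 1) = P * ((real n - 1) / (2 * real n))"
    using n_ge_2 R_pos by (simp_all add: P_def field_simps power2_eq_square)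
  moreover have "P * ((real n - 1)\<^sup>2 / (4 * real n)) \<le> P * real n"
    and "P * ((real n - 1) / (2 * real n)) \<le> P * 1"
    using n_ge_2 \<sigma>_nonneg
    by (intro mult_left_mono; simp add: P_def divide_le_eq power2_eq_square mult_mono)+
  ultimately show ?thesis
    using P_le unfolding K_def by simp
qed

lemma quadratic_phase_step:
  assumes "2 \<le> k" and "real n - 1 \<le> m" and "c * m\<^sup>2 \<le> A k" and "2 * c * m \<le> a k"
  shows "c * (m + 1)\<^sup>2 \<le> A (Suc k) \<and> 2 * c * (m + 1) \<le> a (Suc k)"
proof -
  have c_nonneg: "0 \<le> c"
    using \<sigma>_nonneg by simp
  define X where "X = q * (2 * c * m)"
  have "X \<le> q * a k"
    unfolding X_def using assms(4) q_gt_1 by (intro mult_left_mono) auto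
  moreover have "X \<le> sqrt (real n * (real n + \<sigma> * A k)) / (2 * R)"
  proof -
    have "2 * R * X = (real n - 1) * \<sigma> * m / (4 * R)"
      unfolding X_def using n_minus_1_pos n_ge_2 R_pos by (simp add: field_simps power2_eq_square)
    then have "(2 * R * X)\<^sup>2 = ((real n - 1) * \<sigma> * m / (4 * R))\<^sup>2"
      by simp
    also have "\<dots> = real n * (\<sigma> * (c * m\<^sup>2))"
      using n_ge_2 R_pos by (simp add: field_simps power2_eq_square)
    also have "\<dots> \<le> real n * (real n + \<sigma> * A k)"
    proof (rule mult_left_mono)
      show "\<sigma> * (c * m\<^sup>2) \<le> real n + \<sigma> * A k"
        using mult_left_mono[OF assms(3) \<sigma>_nonneg] by linarith
    qed simp
    finally have "2 * R * X \<le> sqrt (real n * (real n + \<sigma> * A k))"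
      by (rule real_le_rsqrt)
    then show ?thesis
      using R_pos by (simp add: le_divide_eq mult.commute)
  qed
  moreover have "2 * c * (m + 1) \<le> X"
  proof -
    have "m + 1 \<le> q * m"
      using assms(2) n_ge_2 by (simp add: le_divide_eq algebra_simps)
    moreover have "0 \<le> 2 * c"
      using c_nonneg by linarith
    ultimately have "2 * c * (m + 1) \<le> 2 * c * (q * m)"
      by (rule mult_left_mono)
    then show ?thesis
      unfolding X_def by (simp add: mult_ac)
  qed
  ultimately have a_Suc: "2 * c * (m + 1) \<le> a (Suc k)"
    using seq_a_rec[OF assms(1)] by simp
  have "\<gamma> * (m + 1)\<^sup>2 \<le> \<gamma> * m\<^sup>2 + 2 * \<gamma> * (m + 1)" if "0 \<le> \<gamma>" for \<gamma> :: real
    using that by (simp add: power2_eq_square algebra_simps)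
  then have "c * (m + 1)\<^sup>2 \<le> c * m\<^sup>2 + 2 * c * (m + 1)"
    using c_nonneg by blast
  then show ?thesis
    using assms(3) a_Suc by (simp add: seq_A_Suc)
qed

lemma quadratic_phase:
  assumes "0 < \<sigma>" and "k0 \<le> int k"
  shows "c * (real k - real_of_int k0 + real n - 1)\<^sup>2 \<le> A k
    \<and> 2 * c * (real k - real_of_int k0 + real n - 1) \<le> a k"
proof -
  have "nat k0 \<le> k"
    using assms(2) by simp
  then show ?thesis
  proof (induction k rule: dec_induct)
    case base
    then show ?case
      using quadratic_phase_start[OF assms(1)] k0_ge_1 by simp
  next
    case (step k)
    have "2 \<le> k" and "real n - 1 \<le> real k - real_of_int k0 + real n - 1"
      using step.hyps k0_ge_2[OF assms(1)] by linarith+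
    moreover have "real (Suc k) - real_of_int k0 + real n - 1 = (real k - real_of_int k0 + real n - 1) + 1"
      by simp
    ultimately show ?case
      using quadratic_phase_step step.IH by (simp only:)
  qed
qed

end

theorem lemma7:
  fixes n :: nat and \<sigma> R :: real
  assumes "n \<ge> 2" and "\<sigma> \<ge> 0" and "R > 0"
  shows "B_const n \<sigma> R \<ge> real n * max 1 (\<sigma> * (real n - 1) / (2 * R))
       \<and> (\<forall>k::nat. k \<ge> 1 \<longrightarrow>
          seq_A n \<sigma> R k \<ge>
            max (if int k \<le> k0_const n \<sigma> R
                 then (real n - 1) / (2 * R) * (1 + 1 / (real n - 1)) ^ k else 0)
             (max (if int k \<ge> k0_const n \<sigma> R
                   then (real n - 1)^2 * \<sigma> / ((4 * R)^2 * real n)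
                        * (real k - real_of_int (k0_const n \<sigma> R) + real n - 1)^2 else 0)
                  (if int k \<ge> K0_const n
                   then real n * (real k - real_of_int (K0_const n) + real n - 1) / (2 * R)
                   else 0)))"
proof -
  interpret step_sizes n \<sigma> R
    using assms by unfold_locales
  have "real n * max 1 (\<sigma> * (real n - 1) / (2 * R)) \<le> B"
    using B_ge_n B_ge_\<sigma> by (simp add: max_mult_distrib_left)
  moreover have "max (if int k \<le> k0 then (real n - 1) / (2 * R) * (1 + 1 / (real n - 1)) ^ k else 0)
      (max (if k0 \<le> int k then c * (real k - real_of_int k0 + real n - 1)\<^sup>2 else 0)
        (if K0 \<le> int k then real n * (real k - real_of_int K0 + real n - 1) / (2 * R) else 0))
      \<le> A k" if "1 \<le> k" for k
  proof -
    have "(if int k \<le> k0 then (real n - 1) / (2 * R) * (1 + 1 / (real n - 1)) ^ k else 0) \<le> A k"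
      using geometric_phase[OF that] seq_A_nonneg[of k] by (simp add: one_plus_inverse_eq_q)
    moreover have "(if k0 \<le> int k then c * (real k - real_of_int k0 + real n - 1)\<^sup>2 else 0) \<le> A k"
      using quadratic_phase[of k] seq_A_nonneg[of k] \<sigma>_nonneg by (cases "\<sigma> = 0") auto
    moreover have "(if K0 \<le> int k then real n * (real k - real_of_int K0 + real n - 1) / (2 * R)
        else 0) \<le> A k"
      using linear_phase[of k] seq_A_nonneg[of k] by simp
    ultimately show ?thesis
      by simp
  qed
  ultimately show ?thesis
    by blast
qed

end
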